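(* Let $F$ be a minimally unsatisfiable clause-set and $\vec{v} = (v_1,\dots,v_n)$, $n\ge 2$, a singular tuple for $F$ with singularity-degree tuple $(m_1,\dots,m_n)$. Let $i \in \{1,\dots,n-1\}$, let $\pi$ be the permutation of $\{1,\dots,n\}$ exchanging $i$ and $i+1$ and fixing all other elements, and let $\vec{v}' := (v_{\pi(1)},\dots,v_{\pi(n)})$. When $\vec{v}'$ is a singular tuple for $F$ (i.e., $\pi$ is singularity-preserving), let $(m_1',\dots,m_n')$ be its singularity-degree tuple. Then: 1. If $\pi$ is singularity-preserving, then $m_j' = m_j$ for all $j \in \{1,\dots,n\}\setminus\{i,i+1\}$. 2. Assume $m_i \ge 2$. Then (a) $\pi$ is singularity-preserving; (b) $m_i' \le m_{i+1}+1$; (c) $m_{i+1}' \ge m_i - 1$; (d) if $m_{i+1}=1$ then $m_i' = 1$; (e) if $m_{i+1}\ge 2$ then $m_{i+1}' \ge 2$. 3. Assume $m_i = 1$. (a) If $m_{i+1} = 1$, then $\pi$ is singularity-preserving, $m_{i+1}' = 1$ and $m_i' \in \{1,2\}$. (b) If $m_{i+1} \ge 2$, then $\pi$ is singularity-preserving if and only if $v_{i+1}$ is singular for $\mathrm{DP}_{v_1,\dots,v_{i-1}}(F)$; and if $\pi$ is singularity-preserving then $m_i' \ge 2$.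
   Context: Literals are variables $v$ and complements $\overline{v}$; a clause is a finite set of literals with no complementary pair; a clause-set is a finite set of clauses; $\mathrm{ldeg}_F(x)$ is the number of clauses of $F$ containing literal $x$, and $\mathrm{vdeg}_F(v)=\mathrm{ldeg}_F(v)+\mathrm{ldeg}_F(\overline{v})$. $\mathrm{DP}_v(F) := \{C \in F : v \notin \mathrm{var}(C)\} \cup \{(C \cup D)\setminus\{v,\overline{v}\} : C, D \in F,\ C \cap \overline{D} = \{v\}\}$, and $\mathrm{DP}_{v_1,\dots,v_k}(F)$ is the result of applying $\mathrm{DP}_{v_1},\dots,\mathrm{DP}_{v_k}$ in this order ($F$ itself if $k=0$). A variable $v$ is singular for $F$ if $\min(\mathrm{ldeg}_F(v),\mathrm{ldeg}_F(\overline{v}))=1$, and $m$-singular ($m\ge1$) if moreover $\mathrm{vdeg}_F(v)-1=m$. For a minimally unsatisfiable $F$, a tuple $(v_1,\dots,v_n)$ is a singular tuple for $F$ if each $v_i$ is singular for $\mathrm{DP}_{v_1,\dots,v_{i-1}}(F)$; its singularity-degree tuple is $(m_1,\dots,m_n)$ where $v_i$ is $m_i$-singular for $\mathrm{DP}_{v_1,\dots,v_{i-1}}(F)$. A permutation $\pi$ is singularity-preserving for $F$ and $(v_1,\dots,v_n)$ if $(v_{\pi(1)},\dots,v_{\pi(n)})$ is also a singular tuple for $F$. *)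

theory Defs
  imports Main
begin

datatype 'v lit = Pos 'v | Neg 'v

fun comp :: "'v lit \<Rightarrow> 'v lit" where
  "comp (Pos v) = Neg v"
| "comp (Neg v) = Pos v"

fun var_of :: "'v lit \<Rightarrow> 'v" where
  "var_of (Pos v) = v"
| "var_of (Neg v) = v"

type_synonym 'v clause = "'v lit set"
type_synonym 'v clause_set = "'v clause set"

definition is_clause :: "'v clause \<Rightarrow> bool" where
  "is_clause C \<longleftrightarrow> finite C \<and> (\<forall>x\<in>C. comp x \<notin> C)"

definition is_clause_set :: "'v clause_set \<Rightarrow> bool" where
  "is_clause_set F \<longleftrightarrow> finite F \<and> (\<forall>C\<in>F. is_clause C)"

definition vars :: "'v clause \<Rightarrow> 'v set" where
  "vars C = var_of ` C"

fun lit_val :: "('v \<Rightarrow> bool) \<Rightarrow> 'v lit \<Rightarrow> bool" where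
  "lit_val \<phi> (Pos v) = \<phi> v"
| "lit_val \<phi> (Neg v) = (\<not> \<phi> v)"

definition satisfiable :: "'v clause_set \<Rightarrow> bool" where
  "satisfiable F \<longleftrightarrow> (\<exists>\<phi>. \<forall>C\<in>F. \<exists>x\<in>C. lit_val \<phi> x)"

definition min_unsat :: "'v clause_set \<Rightarrow> bool" where
  "min_unsat F \<longleftrightarrow> is_clause_set F \<and> \<not> satisfiable F \<and> (\<forall>G. G \<subset> F \<longrightarrow> satisfiable G)"

definition ldeg :: "'v clause_set \<Rightarrow> 'v lit \<Rightarrow> nat" where
  "ldeg F x = card {C \<in> F. x \<in> C}"

definition vdeg :: "'v clause_set \<Rightarrow> 'v \<Rightarrow> nat" where
  "vdeg F v = ldeg F (Pos v) + ldeg F (Neg v)"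

definition DP :: "'v \<Rightarrow> 'v clause_set \<Rightarrow> 'v clause_set" where
  "DP v F = {C \<in> F. v \<notin> vars C} \<union>
     {(C \<union> D) - {Pos v, Neg v} | C D. C \<in> F \<and> D \<in> F \<and> C \<inter> comp ` D = {Pos v}}"

definition DPs :: "'v clause_set \<Rightarrow> 'v list \<Rightarrow> 'v clause_set" where
  "DPs F vs = fold DP vs F"

definition singular :: "'v clause_set \<Rightarrow> 'v \<Rightarrow> bool" where
  "singular F v \<longleftrightarrow> min (ldeg F (Pos v)) (ldeg F (Neg v)) = 1"

definition m_singular :: "nat \<Rightarrow> 'v clause_set \<Rightarrow> 'v \<Rightarrow> bool" where
  "m_singular m F v \<longleftrightarrow> m \<ge> 1 \<and> singular F v \<and> vdeg F v - 1 = m"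

text \<open>Tuples are lists, indexed from 0: position j of the list is the paper's v_{j+1}.\<close>
definition singular_tuple :: "'v clause_set \<Rightarrow> 'v list \<Rightarrow> bool" where
  "singular_tuple F vs \<longleftrightarrow> min_unsat F \<and>
     (\<forall>j < length vs. singular (DPs F (take j vs)) (vs ! j))"

text \<open>Singularity degree at position j (meaningful when vs is a singular tuple).\<close>
definition sing_deg :: "'v clause_set \<Rightarrow> 'v list \<Rightarrow> nat \<Rightarrow> nat" where
  "sing_deg F vs j = vdeg (DPs F (take j vs)) (vs ! j) - 1"

end

theory Submission
  imports Defs
begin

text \<open>Let \<open>v\<close> occur in the minimally unsatisfiable \<open>G\<close> with a literal \<open>x\<close> of degree one, in
  the clause \<open>C\<close>. Then \<open>x\<close> clashes with every clause \<open>D\<close> containing \<open>comp x\<close> in \<open>x\<close> alone,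
  and \<open>DP v G\<close> arises from \<open>G\<close> by replacing \<open>C\<close> and these \<open>D\<close> by the resolvents of \<open>C\<close>
  with the \<open>D\<close>, which are new and pairwise distinct. So \<open>DP v G\<close> is again minimally
  unsatisfiable, and its literal degrees can be read off those of \<open>G\<close>: a literal of another
  variable keeps its degree if it is not in \<open>C\<close>, and if it is, say \<open>y \<in> C\<close>, it gains
  \<open>ldeg G (comp x) - 1\<close> minus the number of clauses containing both \<open>comp x\<close> and \<open>y\<close>.

  Two singular DP-reductions commute when both orders are singular: one inclusion is checked
  clause by clause, and equality follows because both sides are minimally unsatisfiable. Hence
  swapping two neighbours of a singular tuple leaves all other reductions unchanged, and the
  relations between the old and new degrees follow from the degree formula by distinguishing
  whether, and with which degree of its complement, the second variable occurs in \<open>C\<close>.\<close>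

lemma comp_comp [simp]: "comp (comp x) = x"
  by (cases x) auto

lemma var_of_comp [simp]: "var_of (comp x) = var_of x"
  by (cases x) auto

lemma comp_eq_iff [simp]: "comp x = comp y \<longleftrightarrow> x = y"
  by (metis comp_comp)

lemma comp_eq_Pos_Neg [simp]: "comp z = Pos v \<longleftrightarrow> z = Neg v" "comp z = Neg v \<longleftrightarrow> z = Pos v"
  by (cases z; simp)+

lemma lit_val_comp [simp]: "lit_val \<phi> (comp x) \<longleftrightarrow> \<not> lit_val \<phi> x"
  by (cases x) auto

lemma lit_val_upd_other: "var_of z \<noteq> u \<Longrightarrow> lit_val (\<phi>(u := b)) z = lit_val \<phi> z"
  by (cases z) auto

lemma lit_val_flip: "lit_val (\<phi>(var_of x := \<not> \<phi> (var_of x))) x \<longleftrightarrow> \<not> lit_val \<phi> x"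
  by (cases x) auto

lemma var_of_eq_iff: "var_of z = var_of x \<longleftrightarrow> z = x \<or> z = comp x"
  by (cases z; cases x) auto

lemma in_comp_image_iff: "z \<in> comp ` D \<longleftrightarrow> comp z \<in> D"
  by (metis comp_comp image_eqI imageE)

lemma var_of_mem_vars_iff: "var_of x \<in> vars E \<longleftrightarrow> x \<in> E \<or> comp x \<in> E"
  unfolding vars_def by (auto simp: var_of_eq_iff) (metis image_eqI var_of_comp)

lemma mem_vars_iff: "u \<in> vars E \<longleftrightarrow> Pos u \<in> E \<or> Neg u \<in> E"
  using var_of_mem_vars_iff[of "Pos u"] by simp

lemma comp_notin_clause: "is_clause E \<Longrightarrow> z \<in> E \<Longrightarrow> comp z \<notin> E"
  by (auto simp: is_clause_def)

lemma satisfiable_subset: "satisfiable F \<Longrightarrow> G \<subseteq> F \<Longrightarrow> satisfiable G"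
  unfolding satisfiable_def by blast

lemma clash_mem: "C \<inter> comp ` D = {y} \<Longrightarrow> y \<in> C \<and> comp y \<in> D"
  using in_comp_image_iff[of y D] by blast

lemma clash_swap: "C \<inter> comp ` D = {y} \<Longrightarrow> D \<inter> comp ` C = {comp y}"
  unfolding set_eq_iff in_comp_image_iff Int_iff singleton_iff by (metis comp_comp)

lemma resolvent_is_clause:
  assumes "is_clause C" "is_clause D" "C \<inter> comp ` D = {y}"
  shows "is_clause (C \<union> D - {y, comp y})"
proof -
  have "comp z \<notin> C \<union> D - {y, comp y}" if "z \<in> C \<union> D - {y, comp y}" for z
    using that assms comp_notin_clause[OF assms(1)] comp_notin_clause[OF assms(2)]
    by (auto simp: set_eq_iff in_comp_image_iff)
  then show ?thesis
    using assms(1,2) by (auto simp: is_clause_def)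
qed

section \<open>DP-reduction\<close>

text \<open>\<open>DP_def\<close> singles out the positive literal; resolving on the negative one gives the same
  clauses.\<close>

lemma DP_var_of:
  "DP (var_of x) H = {E \<in> H. var_of x \<notin> vars E} \<union>
     {X \<union> Y - {x, comp x} | X Y. X \<in> H \<and> Y \<in> H \<and> X \<inter> comp ` Y = {x}}"
proof (cases x)
  case (Neg v)
  have "C \<inter> comp ` D = {Pos v} \<longleftrightarrow> D \<inter> comp ` C = {Neg v}" for C D :: "'a clause"
    using clash_swap[of C D "Pos v"] clash_swap[of D C "Neg v"] by auto
  moreover have "C \<union> D - {Pos v, Neg v} = D \<union> C - {Neg v, Pos v}" for C D :: "'a clause"
    by blast
  ultimately show ?thesis
    using Neg unfolding DP_def by (simp only: var_of.simps comp.simps) blast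
qed (simp add: DP_def)

lemma DP_keep: "E \<in> H \<Longrightarrow> u \<notin> vars E \<Longrightarrow> E \<in> DP u H"
  unfolding DP_def by blast

lemma clashing_resolvent_mem_DP:
  "X \<in> H \<Longrightarrow> Y \<in> H \<Longrightarrow> X \<inter> comp ` Y = {x} \<Longrightarrow> X \<union> Y - {x, comp x} \<in> DP (var_of x) H"
  unfolding DP_var_of by (rule UnI2) blast

lemma DP_cases:
  assumes "E \<in> DP u H"
  obtains "E \<in> H" "u \<notin> vars E"
  | P N where "P \<in> H" "N \<in> H" "Pos u \<in> P" "Neg u \<in> N" "E = P \<union> N - {Pos u, Neg u}"
proof -
  from assms consider "E \<in> H" "u \<notin> vars E"
    | P N where "P \<in> H" "N \<in> H" "P \<inter> comp ` N = {Pos u}" "E = P \<union> N - {Pos u, Neg u}"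
    unfolding DP_def by blast
  then show thesis
  proof cases
    case (2 P N)
    then have "Pos u \<in> P" "Neg u \<in> N"
      using clash_mem[OF 2(3)] by simp_all
    with 2 that(2) show thesis
      by blast
  qed (use that(1) in blast)
qed

lemma var_notin_vars_DP: "E \<in> DP v H \<Longrightarrow> v \<notin> vars E"
  by (erule DP_cases) (auto simp: mem_vars_iff)

lemma DP_is_clause_set:
  assumes "is_clause_set H"
  shows "is_clause_set (DP v H)"
proof -
  have "DP v H \<subseteq> H \<union> (\<lambda>(C, D). C \<union> D - {Pos v, Neg v}) ` (H \<times> H)"
    unfolding DP_def by auto
  then have "finite (DP v H)"
    using assms by (meson finite_SigmaI finite_Un finite_imageI finite_subset is_clause_set_def)
  moreover have "is_clause E" if "E \<in> DP v H" for E
    using that assms resolvent_is_clause[of _ _ "Pos v"]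
    unfolding DP_def is_clause_set_def by auto
  ultimately show ?thesis
    unfolding is_clause_set_def by blast
qed

lemma satisfies_DP_falsified_mem_vars:
  assumes "\<forall>E'\<in>DP v H. \<exists>z\<in>E'. lit_val \<phi> z"
    and "E \<in> H" and "\<forall>z\<in>E. \<not> lit_val (\<phi>(v := b)) z"
  shows "v \<in> vars E"
proof (rule ccontr)
  assume "v \<notin> vars E"
  then obtain z where z: "z \<in> E" "lit_val \<phi> z"
    using assms(1) DP_keep[OF assms(2)] by blast
  then have "var_of z \<noteq> v"
    using \<open>v \<notin> vars E\<close> unfolding vars_def by auto
  then have "lit_val (\<phi>(v := b)) z"
    using z(2) by (simp add: lit_val_upd_other)
  then show False
    using assms(3) z(1) by blast
qed

lemma DP_unsatisfiable:
  assumes "is_clause_set H" and "\<not> satisfiable H"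
  shows "\<not> satisfiable (DP v H)"
proof
  assume "satisfiable (DP v H)"
  then obtain \<phi> where \<phi>: "\<forall>E\<in>DP v H. \<exists>z\<in>E. lit_val \<phi> z"
    unfolding satisfiable_def by blast
  \<comment> \<open>each value of \<open>v\<close> falsifies a clause of \<open>H\<close>, which contains \<open>v\<close> with the opposite sign\<close>
  have falsified: "\<exists>E\<in>H. (\<forall>z\<in>E. \<not> lit_val (\<phi>(v := b)) z) \<and> v \<in> vars E" for b
  proof -
    obtain E where "E \<in> H" "\<forall>z\<in>E. \<not> lit_val (\<phi>(v := b)) z"
      using assms(2) unfolding satisfiable_def by blast
    then show ?thesis
      using satisfies_DP_falsified_mem_vars[OF \<phi>] by blast
  qed
  obtain E1 where E1: "E1 \<in> H" "\<forall>z\<in>E1. \<not> lit_val (\<phi>(v := True)) z" "Neg v \<in> E1"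
    using falsified[of True] by (auto simp: mem_vars_iff)
  obtain E0 where E0: "E0 \<in> H" "\<forall>z\<in>E0. \<not> lit_val (\<phi>(v := False)) z" "Pos v \<in> E0"
    using falsified[of False] by (auto simp: mem_vars_iff)
  have "is_clause E0"
    using assms(1) E0(1) by (auto simp: is_clause_set_def)
  show False
  proof (cases "E0 \<inter> comp ` E1 = {Pos v}")
    case True
    then have "E0 \<union> E1 - {Pos v, Neg v} \<in> DP v H"
      using clashing_resolvent_mem_DP[OF E0(1) E1(1)] by simp
    then obtain z where "z \<in> E0 \<union> E1 - {Pos v, Neg v}" "lit_val \<phi> z"
      using \<phi> by blast
    then show False
      using E0(2) E1(2) lit_val_upd_other[of z v] by (cases z) auto
  next
    case False
    moreover have "Pos v \<in> E0 \<inter> comp ` E1"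
      using E0(3) E1(3) by (auto simp: in_comp_image_iff)
    ultimately obtain y where "y \<in> E0 \<inter> comp ` E1" "y \<noteq> Pos v"
      by blast
    then have y: "y \<in> E0" "comp y \<in> E1" "y \<noteq> Pos v"
      by (auto simp: in_comp_image_iff)
    moreover have "y \<noteq> Neg v"
      using comp_notin_clause[OF \<open>is_clause E0\<close> E0(3)] y(1) by auto
    ultimately have "var_of y \<noteq> v"
      by (cases y) auto
    then show False
      using y E0(2) E1(2) lit_val_upd_other by (metis lit_val_comp var_of_comp)
  qed
qed

lemma ldeg_eq_1_unique: "ldeg H x = 1 \<Longrightarrow> X \<in> H \<Longrightarrow> x \<in> X \<Longrightarrow> Y \<in> H \<Longrightarrow> x \<in> Y \<Longrightarrow> X = Y"
  unfolding ldeg_def by (metis (mono_tags, lifting) card_1_singletonE mem_Collect_eq singletonD)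

lemma ldeg_eq_1_obtains:
  assumes "ldeg H x = 1"
  obtains X where "X \<in> H" "x \<in> X"
  using assms unfolding ldeg_def by (metis (mono_tags, lifting) card_1_singletonE mem_Collect_eq singletonI)

lemma vdeg_var_of: "vdeg H (var_of x) = ldeg H x + ldeg H (comp x)"
  by (cases x) (auto simp: vdeg_def)

lemma singular_var_of_iff: "singular H (var_of y) \<longleftrightarrow> min (ldeg H y) (ldeg H (comp y)) = 1"
  by (cases y) (auto simp: singular_def min.commute)

lemma singular_obtains_unit_literal:
  assumes "singular H u"
  obtains x where "var_of x = u" "ldeg H x = 1" "ldeg H (comp x) \<ge> 1"
proof -
  have "min (ldeg H (Pos u)) (ldeg H (Neg u)) = 1"
    using assms unfolding singular_def .
  then show thesis
    using that[of "Pos u"] that[of "Neg u"] by (auto simp: min_def split: if_splits)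
qed

lemma singular_vdeg_ge_2: "singular H u \<Longrightarrow> vdeg H u \<ge> 2"
  by (erule singular_obtains_unit_literal) (metis vdeg_var_of add_mono one_add_one order_refl)

lemma singular_DP_neq: "singular (DP v H) w \<Longrightarrow> w \<noteq> v"
  by (metis singular_obtains_unit_literal ldeg_eq_1_obtains var_notin_vars_DP var_of_mem_vars_iff)

section \<open>Singular DP-reduction of minimally unsatisfiable clause-sets\<close>

lemma min_unsat_clause: "min_unsat H \<Longrightarrow> E \<in> H \<Longrightarrow> is_clause E"
  by (auto simp: min_unsat_def is_clause_set_def)

lemma min_unsat_finite: "min_unsat H \<Longrightarrow> finite H"
  by (auto simp: min_unsat_def is_clause_set_def)

lemma min_unsat_falsified_clause:
  assumes "min_unsat H" and "X \<in> H" and "\<forall>E\<in>H - {X}. \<exists>z\<in>E. lit_val \<phi> z"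
  shows "\<forall>z\<in>X. \<not> lit_val \<phi> z"
proof (intro ballI notI)
  fix z assume "z \<in> X" "lit_val \<phi> z"
  then have "\<forall>E\<in>H. \<exists>z\<in>E. lit_val \<phi> z"
    using assms(3) by blast
  then show False
    using assms(1) unfolding min_unsat_def satisfiable_def by blast
qed

lemma min_unsat_remove:
  assumes "min_unsat H" and "E \<in> H"
  obtains \<phi> where "\<forall>E'\<in>H - {E}. \<exists>z\<in>E'. lit_val \<phi> z" and "\<forall>z\<in>E. \<not> lit_val \<phi> z"
proof -
  have "satisfiable (H - {E})"
    using assms unfolding min_unsat_def by blast
  then obtain \<phi> where "\<forall>E'\<in>H - {E}. \<exists>z\<in>E'. lit_val \<phi> z"
    unfolding satisfiable_def by blast
  with min_unsat_falsified_clause[OF assms] that show thesis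
    by blast
qed

lemma min_unsat_subset_eq: "min_unsat F \<Longrightarrow> min_unsat G \<Longrightarrow> F \<subseteq> G \<Longrightarrow> F = G"
  unfolding min_unsat_def by blast

text \<open>Flip \<open>var_of x\<close> in an assignment that falsifies only \<open>Y\<close>: as \<open>x\<close> occurs only in \<open>X\<close>, every
  other clause stays satisfied by a literal of another variable, so \<open>X\<close> must now be falsified.\<close>

lemma exists_assignment_falsifying_resolvent:
  assumes mu: "min_unsat H" and unit: "ldeg H x = 1"
    and X: "X \<in> H" "x \<in> X" and Y: "Y \<in> H" "comp x \<in> Y"
  obtains \<phi> where "\<forall>z\<in>X. \<not> lit_val \<phi> z" and "\<forall>z\<in>Y - {comp x}. \<not> lit_val \<phi> z"
    and "\<forall>E\<in>H - {X, Y}. \<exists>z\<in>E. var_of z \<noteq> var_of x \<and> lit_val \<phi> z"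
proof -
  obtain \<phi>0 where sat: "\<forall>E\<in>H - {Y}. \<exists>z\<in>E. lit_val \<phi>0 z" and unsat: "\<forall>z\<in>Y. \<not> lit_val \<phi>0 z"
    using min_unsat_remove[OF mu Y(1)] .
  define \<phi> where "\<phi> = \<phi>0(var_of x := \<not> \<phi>0 (var_of x))"
  have agree: "lit_val \<phi> z = lit_val \<phi>0 z" if "var_of z \<noteq> var_of x" for z
    using that by (simp add: \<phi>_def lit_val_upd_other)
  have x_false: "\<not> lit_val \<phi> x"
    using unsat Y(2) lit_val_flip[of \<phi>0 x] unfolding \<phi>_def by auto
  have "x \<notin> Y"
    using comp_notin_clause[OF min_unsat_clause[OF mu Y(1)] Y(2)] by simp
  then have Y_false: "\<forall>z\<in>Y - {comp x}. \<not> lit_val \<phi> z"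
    using unsat agree var_of_eq_iff by fastforce
  have others: "\<forall>E\<in>H - {X, Y}. \<exists>z\<in>E. var_of z \<noteq> var_of x \<and> lit_val \<phi> z"
  proof
    fix E assume E: "E \<in> H - {X, Y}"
    then obtain z where z: "z \<in> E" "lit_val \<phi>0 z"
      using sat by blast
    have "z \<noteq> x"
      using ldeg_eq_1_unique[OF unit X, of E] E z(1) by blast
    moreover have "z \<noteq> comp x"
      using unsat Y(2) z(2) by blast
    ultimately show "\<exists>z\<in>E. var_of z \<noteq> var_of x \<and> lit_val \<phi> z"
      using z agree var_of_eq_iff by metis
  qed
  have "\<forall>E\<in>H - {X}. \<exists>z\<in>E. lit_val \<phi> z"
  proof
    fix E assume "E \<in> H - {X}"
    then consider "E = Y" | "E \<in> H - {X, Y}"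
      by blast
    then show "\<exists>z\<in>E. lit_val \<phi> z"
      using others Y(2) x_false by cases (auto intro: bexI[of _ "comp x"])
  qed
  then have "\<forall>z\<in>X. \<not> lit_val \<phi> z"
    by (rule min_unsat_falsified_clause[OF mu X(1)])
  then show thesis
    using that Y_false others by blast
qed

lemma clash_eq_singleton:
  assumes "min_unsat H" "ldeg H x = 1" "X \<in> H" "x \<in> X" "Y \<in> H" "comp x \<in> Y"
  shows "X \<inter> comp ` Y = {x}"
proof -
  obtain \<phi> where X_false: "\<forall>z\<in>X. \<not> lit_val \<phi> z"
    and Y_false: "\<forall>z\<in>Y - {comp x}. \<not> lit_val \<phi> z"
    using exists_assignment_falsifying_resolvent[OF assms] .
  have "y = x" if "y \<in> X" "comp y \<in> Y" for y
  proof (rule ccontr)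
    assume "y \<noteq> x"
    then have "comp y \<in> Y - {comp x}"
      using that(2) by simp
    then have "\<not> lit_val \<phi> (comp y)"
      using Y_false by blast
    then show False
      using X_false that(1) by simp
  qed
  then show ?thesis
    using assms(4,6) in_comp_image_iff by blast
qed

lemma DP_singular_eq:
  assumes mu: "min_unsat G" and unit: "ldeg G x = 1" and C: "C \<in> G" "x \<in> C"
  shows "DP (var_of x) G = (G - insert C {D \<in> G. comp x \<in> D}) \<union>
           (\<lambda>D. C \<union> D - {x, comp x}) ` {D \<in> G. comp x \<in> D}"
proof -
  have "var_of x \<notin> vars E \<longleftrightarrow> E \<noteq> C \<and> comp x \<notin> E" if "E \<in> G" for E
  proof -
    have "x \<in> E \<longleftrightarrow> E = C"
      using ldeg_eq_1_unique[OF unit that _ C] C(2) by blast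
    then show ?thesis
      unfolding var_of_mem_vars_iff by blast
  qed
  then have kept: "{E \<in> G. var_of x \<notin> vars E} = G - insert C {D \<in> G. comp x \<in> D}"
    by blast
  have resolvents: "{X \<union> Y - {x, comp x} | X Y. X \<in> G \<and> Y \<in> G \<and> X \<inter> comp ` Y = {x}} =
      (\<lambda>D. C \<union> D - {x, comp x}) ` {D \<in> G. comp x \<in> D}" (is "?R = ?f ` ?A")
  proof (intro set_eqI iffI)
    fix E assume "E \<in> ?R"
    then obtain X Y where XY: "X \<in> G" "Y \<in> G" "X \<inter> comp ` Y = {x}" "E = X \<union> Y - {x, comp x}"
      by blast
    then have "X = C" "comp x \<in> Y"
      using clash_mem[OF XY(3)] ldeg_eq_1_unique[OF unit XY(1) _ C] by blast+
    then show "E \<in> ?f ` ?A"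
      using XY by blast
  next
    fix E assume "E \<in> ?f ` ?A"
    then obtain D where "D \<in> G" "comp x \<in> D" "E = C \<union> D - {x, comp x}"
      by blast
    then show "E \<in> ?R"
      using C(1) clash_eq_singleton[OF mu unit C] by blast
  qed
  show ?thesis
    unfolding DP_var_of kept resolvents ..
qed

lemma resolvent_mem_DP:
  assumes mu: "min_unsat H" and "singular H (var_of x)"
    and P: "P \<in> H" "x \<in> P" and N: "N \<in> H" "comp x \<in> N"
  shows "P \<union> N - {x, comp x} \<in> DP (var_of x) H"
proof -
  obtain z where z: "var_of z = var_of x" "ldeg H z = 1"
    using singular_obtains_unit_literal[OF assms(2)] by metis
  then consider "z = x" | "z = comp x"
    using var_of_eq_iff by blast
  then show ?thesis
  proof cases
    case 1
    then have "P \<inter> comp ` N = {x}"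
      using clash_eq_singleton[OF mu _ P N] z by simp
    then show ?thesis
      using clashing_resolvent_mem_DP[OF P(1) N(1)] by blast
  next
    case 2
    then have "N \<inter> comp ` P = {comp x}"
      using clash_eq_singleton[OF mu _ N, of P] z P by simp
    then have "N \<union> P - {comp x, comp (comp x)} \<in> DP (var_of x) H"
      using clashing_resolvent_mem_DP[OF N(1) P(1)] by simp
    moreover have "N \<union> P - {comp x, comp (comp x)} = P \<union> N - {x, comp x}"
      by auto
    ultimately show ?thesis
      by simp
  qed
qed

lemma satisfiable_DP_remove_kept:
  assumes mu: "min_unsat G" and unit: "ldeg G x = 1" and C: "C \<in> G" "x \<in> C"
    and E: "E \<in> G" "E \<noteq> C" "comp x \<notin> E"
  shows "satisfiable (DP (var_of x) G - {E})"
proof -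
  obtain \<phi> where sat: "\<forall>E'\<in>G - {E}. \<exists>z\<in>E'. lit_val \<phi> z"
    by (rule min_unsat_remove[OF mu E(1)])
  have "comp x \<notin> C"
    using comp_notin_clause[OF min_unsat_clause[OF mu C(1)] C(2)] .
  have "\<exists>z\<in>E'. lit_val \<phi> z" if "E' \<in> DP (var_of x) G - {E}" for E'
  proof -
    from that consider "E' \<in> G - {E}" | D where "D \<in> G" "comp x \<in> D" "E' = C \<union> D - {x, comp x}"
      unfolding DP_singular_eq[OF mu unit C] by blast
    then show ?thesis
    proof cases
      case (2 D)
      then have "C \<in> G - {E}" "D \<in> G - {E}"
        using C(1) E by blast+
      then obtain z1 z2 where z: "z1 \<in> C" "lit_val \<phi> z1" "z2 \<in> D" "lit_val \<phi> z2"
        using sat by meson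
      have "x \<notin> D"
        using comp_notin_clause[OF min_unsat_clause[OF mu 2(1)] 2(2)] by simp
      then show ?thesis
        using z 2(3) \<open>comp x \<notin> C\<close> by (cases "z1 = x") auto
    qed (use sat in blast)
  qed
  then show ?thesis
    unfolding satisfiable_def by blast
qed

lemma satisfiable_DP_remove_resolvent:
  assumes mu: "min_unsat G" and unit: "ldeg G x = 1" and C: "C \<in> G" "x \<in> C"
    and D0: "D0 \<in> G" "comp x \<in> D0"
  shows "satisfiable (DP (var_of x) G - {C \<union> D0 - {x, comp x}})"
proof -
  obtain \<phi> where others: "\<forall>E\<in>G - {C, D0}. \<exists>z\<in>E. var_of z \<noteq> var_of x \<and> lit_val \<phi> z"
    by (rule exists_assignment_falsifying_resolvent[OF mu unit C D0])
  have "comp x \<notin> C"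
    using comp_notin_clause[OF min_unsat_clause[OF mu C(1)] C(2)] .
  have "\<exists>z\<in>E'. lit_val \<phi> z" if "E' \<in> DP (var_of x) G - {C \<union> D0 - {x, comp x}}" for E'
  proof -
    from that consider "E' \<in> G - {C, D0}" | D where "D \<in> G - {C, D0}" "E' = C \<union> D - {x, comp x}"
      unfolding DP_singular_eq[OF mu unit C] using D0 \<open>comp x \<notin> C\<close> by blast
    then show ?thesis
    proof cases
      case (2 D)
      then obtain z where "z \<in> D" "var_of z \<noteq> var_of x" "lit_val \<phi> z"
        using others by blast
      then show ?thesis
        using 2(2) by auto
    qed (use others in blast)
  qed
  then show ?thesis
    unfolding satisfiable_def by blast
qed

lemma DP_min_unsat:
  assumes mu: "min_unsat G" and "singular G v"
  shows "min_unsat (DP v G)"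
proof -
  obtain x where x: "var_of x = v" "ldeg G x = 1"
    using singular_obtains_unit_literal[OF assms(2)] by metis
  obtain C where C: "C \<in> G" "x \<in> C"
    using ldeg_eq_1_obtains[OF x(2)] .
  have remove: "satisfiable (DP v G - {E})" if "E \<in> DP v G" for E
  proof -
    from that consider "E \<in> G" "E \<noteq> C" "comp x \<notin> E"
      | D where "D \<in> G" "comp x \<in> D" "E = C \<union> D - {x, comp x}"
      unfolding x(1)[symmetric] DP_singular_eq[OF mu x(2) C] by blast
    then show ?thesis
    proof cases
      case 1
      then show ?thesis
        using satisfiable_DP_remove_kept[OF mu x(2) C] x(1) by blast
    next
      case (2 D)
      then show ?thesis
        using satisfiable_DP_remove_resolvent[OF mu x(2) C] x(1) by blast
    qed
  qed
  have minimal: "satisfiable F" if F: "F \<subset> DP v G" for F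
  proof -
    obtain E where E: "E \<in> DP v G" "F \<subseteq> DP v G - {E}"
      using F by blast
    then show ?thesis
      using remove satisfiable_subset by blast
  qed
  have "is_clause_set G" "\<not> satisfiable G"
    using mu unfolding min_unsat_def by blast+
  then have "is_clause_set (DP v G)" "\<not> satisfiable (DP v G)"
    by (simp_all add: DP_is_clause_set DP_unsatisfiable)
  then show ?thesis
    unfolding min_unsat_def using minimal by blast
qed

lemma clause_not_subset_resolvent:
  assumes mu: "min_unsat G" and unit: "ldeg G x = 1"
    and C: "C \<in> G" "x \<in> C" and D: "D \<in> G" "comp x \<in> D" and E: "E \<in> G - {C, D}"
  shows "\<not> E - {x, comp x} \<subseteq> C \<union> D"
proof
  assume sub: "E - {x, comp x} \<subseteq> C \<union> D"
  obtain \<phi> where C_false: "\<forall>z\<in>C. \<not> lit_val \<phi> z"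
    and D_false: "\<forall>z\<in>D - {comp x}. \<not> lit_val \<phi> z"
    and others: "\<forall>E\<in>G - {C, D}. \<exists>z\<in>E. var_of z \<noteq> var_of x \<and> lit_val \<phi> z"
    by (rule exists_assignment_falsifying_resolvent[OF mu unit C D])
  obtain z where z: "z \<in> E" "var_of z \<noteq> var_of x" "lit_val \<phi> z"
    using others E by blast
  then have "z \<in> C \<or> z \<in> D - {comp x}"
    using sub by auto
  then show False
    using C_false D_false z(3) by blast
qed

lemma resolvent_notin:
  assumes mu: "min_unsat G" and unit: "ldeg G x = 1"
    and C: "C \<in> G" "x \<in> C" and D: "D \<in> G" "comp x \<in> D"
  shows "C \<union> D - {x, comp x} \<notin> G"
proof
  assume "C \<union> D - {x, comp x} \<in> G"
  moreover have "C \<union> D - {x, comp x} \<noteq> C" "C \<union> D - {x, comp x} \<noteq> D"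
    using C(2) D(2) by blast+
  ultimately have "C \<union> D - {x, comp x} \<in> G - {C, D}"
    by blast
  from clause_not_subset_resolvent[OF mu unit C D this] show False
    by blast
qed

lemma inj_on_resolvent:
  assumes mu: "min_unsat G" and unit: "ldeg G x = 1" and C: "C \<in> G" "x \<in> C"
  shows "inj_on (\<lambda>D. C \<union> D - {x, comp x}) {D \<in> G. comp x \<in> D}"
proof (rule inj_onI, rule ccontr)
  fix D1 D2
  assume D1: "D1 \<in> {D \<in> G. comp x \<in> D}" and D2: "D2 \<in> {D \<in> G. comp x \<in> D}"
    and eq: "C \<union> D1 - {x, comp x} = C \<union> D2 - {x, comp x}" and "D1 \<noteq> D2"
  have "D2 \<noteq> C"
    using D2 comp_notin_clause[OF min_unsat_clause[OF mu C(1)] C(2)] by blast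
  then have "D2 \<in> G - {C, D1}"
    using D2 \<open>D1 \<noteq> D2\<close> by blast
  moreover have "D2 - {x, comp x} \<subseteq> C \<union> D1"
    using eq by blast
  moreover have "D1 \<in> G" "comp x \<in> D1"
    using D1 by blast+
  ultimately show False
    using clause_not_subset_resolvent[OF mu unit C, of D1 D2] by blast
qed

lemma ldeg_split:
  assumes "finite G" "C \<in> G" "A \<subseteq> G" "C \<notin> A"
  shows "ldeg G y = card {E \<in> G - insert C A. y \<in> E} + (if y \<in> C then 1 else 0) + card {D \<in> A. y \<in> D}"
proof -
  have "finite A"
    using assms(1,3) by (rule finite_subset[rotated])
  have "{E \<in> G. y \<in> E} = {E \<in> G - insert C A. y \<in> E} \<union> {E \<in> insert C A. y \<in> E}"
    using assms(2,3) by auto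
  moreover have "card {E \<in> insert C A. y \<in> E} = (if y \<in> C then 1 else 0) + card {D \<in> A. y \<in> D}"
  proof (cases "y \<in> C")
    case True
    then have "{E \<in> insert C A. y \<in> E} = insert C {D \<in> A. y \<in> D}"
      by auto
    then show ?thesis
      using True \<open>finite A\<close> assms(4) by simp
  next
    case False
    then have "{E \<in> insert C A. y \<in> E} = {D \<in> A. y \<in> D}"
      by auto
    then show ?thesis
      using False by simp
  qed
  ultimately show ?thesis
    unfolding ldeg_def using assms(1) \<open>finite A\<close> by (simp add: card_Un_disjoint disjoint_iff)
qed

lemma ldeg_DP_singular:
  assumes mu: "min_unsat G" and unit: "ldeg G x = 1" and C: "C \<in> G" "x \<in> C"
  defines "A \<equiv> {D \<in> G. comp x \<in> D}"
  shows "ldeg (DP (var_of x) G) y =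
    card {E \<in> G - insert C A. y \<in> E} + card {D \<in> A. y \<in> C \<union> D - {x, comp x}}"
proof -
  define f where "f D = C \<union> D - {x, comp x}" for D
  define K where "K = {E \<in> G - insert C A. y \<in> E}"
  have "finite A" "finite K"
    using min_unsat_finite[OF mu] unfolding A_def K_def by simp_all
  have DP_eq: "DP (var_of x) G = (G - insert C A) \<union> f ` A"
    unfolding A_def f_def using DP_singular_eq[OF mu unit C] .
  have "{E \<in> DP (var_of x) G. y \<in> E} = K \<union> f ` {D \<in> A. y \<in> f D}"
    unfolding DP_eq K_def by auto
  moreover have "K \<inter> f ` {D \<in> A. y \<in> f D} = {}"
    using resolvent_notin[OF mu unit C] unfolding K_def A_def f_def by auto
  moreover have "card (f ` {D \<in> A. y \<in> f D}) = card {D \<in> A. y \<in> f D}"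
    using inj_on_resolvent[OF mu unit C] unfolding A_def f_def
    by (intro card_image) (auto intro: inj_on_subset)
  ultimately have "ldeg (DP (var_of x) G) y = card K + card {D \<in> A. y \<in> f D}"
    unfolding ldeg_def using \<open>finite A\<close> \<open>finite K\<close> by (simp add: card_Un_disjoint)
  then show ?thesis
    unfolding K_def f_def .
qed

lemma
  assumes mu: "min_unsat G" and unit: "ldeg G x = 1" and C: "C \<in> G" "x \<in> C"
    and y: "var_of y \<noteq> var_of x"
  shows ldeg_DP_unit_mem: "y \<in> C \<Longrightarrow> ldeg (DP (var_of x) G) y + 1 + card {D \<in> G. comp x \<in> D \<and> y \<in> D}
      = ldeg G y + ldeg G (comp x)"
    and ldeg_DP_unit_notin: "y \<notin> C \<Longrightarrow> ldeg (DP (var_of x) G) y = ldeg G y"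
proof -
  define A where "A = {D \<in> G. comp x \<in> D}"
  have "A \<subseteq> G" "C \<notin> A"
    using comp_notin_clause[OF min_unsat_clause[OF mu C(1)] C(2)] unfolding A_def by blast+
  then have "ldeg G y = card {E \<in> G - insert C A. y \<in> E} + (if y \<in> C then 1 else 0)
      + card {D \<in> A. y \<in> D}"
    by (rule ldeg_split[OF min_unsat_finite[OF mu] C(1)])
  moreover have "ldeg (DP (var_of x) G) y =
      card {E \<in> G - insert C A. y \<in> E} + card {D \<in> A. y \<in> C \<union> D - {x, comp x}}"
    using ldeg_DP_singular[OF mu unit C] unfolding A_def .
  moreover have "{D \<in> A. y \<in> C \<union> D - {x, comp x}} = (if y \<in> C then A else {D \<in> A. y \<in> D})"
    using y by auto
  moreover have "ldeg G (comp x) = card A" "{D \<in> G. comp x \<in> D \<and> y \<in> D} = {D \<in> A. y \<in> D}"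
    unfolding ldeg_def A_def by auto
  ultimately show "y \<in> C \<Longrightarrow> ldeg (DP (var_of x) G) y + 1 + card {D \<in> G. comp x \<in> D \<and> y \<in> D}
      = ldeg G y + ldeg G (comp x)"
    and "y \<notin> C \<Longrightarrow> ldeg (DP (var_of x) G) y = ldeg G y"
    by simp_all
qed

lemma ldeg_DP_unit_mem_bounds:
  assumes mu: "min_unsat G" and unit: "ldeg G x = 1"
    and C: "C \<in> G" "x \<in> C" and y: "y \<in> C" "var_of y \<noteq> var_of x"
  obtains d where "ldeg (DP (var_of x) G) y + 1 + d = ldeg G y + ldeg G (comp x)"
    and "d < ldeg G y" and "d \<le> ldeg G (comp x)"
proof (rule that)
  have fin: "finite G"
    using min_unsat_finite[OF mu] .
  show "ldeg (DP (var_of x) G) y + 1 + card {D \<in> G. comp x \<in> D \<and> y \<in> D} = ldeg G y + ldeg G (comp x)"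
    using ldeg_DP_unit_mem[OF mu unit C y(2,1)] .
  show "card {D \<in> G. comp x \<in> D \<and> y \<in> D} < ldeg G y"
    unfolding ldeg_def
    using C y(1) comp_notin_clause[OF min_unsat_clause[OF mu C(1)] C(2)] fin
    by (intro psubset_card_mono) auto
  show "card {D \<in> G. comp x \<in> D \<and> y \<in> D} \<le> ldeg G (comp x)"
    unfolding ldeg_def using fin by (intro card_mono) auto
qed

lemma ldeg_DP_unit_comp_mem:
  assumes mu: "min_unsat G" and unit: "ldeg G x = 1"
    and C: "C \<in> G" "x \<in> C" and y: "y \<in> C" "var_of y \<noteq> var_of x"
  shows "ldeg (DP (var_of x) G) (comp y) = ldeg G (comp y)"
  using ldeg_DP_unit_notin[OF mu unit C, of "comp y"] y
    comp_notin_clause[OF min_unsat_clause[OF mu C(1)] y(1)] by simp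

lemma ldeg_DP_unit_bounds:
  assumes mu: "min_unsat G" and sq: "singular G (var_of q)" and unit: "ldeg G q = 1"
    and C: "C \<in> G" "q \<in> C" and z: "var_of z \<noteq> var_of q"
  shows "ldeg G z - 1 \<le> ldeg (DP (var_of q) G) z
    \<and> min (ldeg G z) (ldeg G (comp q)) \<le> ldeg (DP (var_of q) G) z
    \<and> ldeg (DP (var_of q) G) z + 1 \<le> ldeg G z + ldeg G (comp q)"
proof (cases "z \<in> C")
  case True
  obtain d where "ldeg (DP (var_of q) G) z + 1 + d = ldeg G z + ldeg G (comp q)"
    and "d < ldeg G z" and "d \<le> ldeg G (comp q)"
    using ldeg_DP_unit_mem_bounds[OF mu unit C True z] .
  then show ?thesis
    unfolding min_le_iff_disj by (intro conjI) linarith+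
next
  case False
  have "ldeg G (comp q) \<ge> 1"
    using sq unit unfolding singular_var_of_iff by simp
  then show ?thesis
    using ldeg_DP_unit_notin[OF mu unit C z False] by simp
qed

section \<open>Commuting two singular DP-reductions\<close>

text \<open>A resolvent on \<open>v\<close> of clauses of \<open>DP w G\<close> may have one or both parents resolvents on
  \<open>w\<close>; the next three lemmas obtain it by resolving in the other order.\<close>

lemma resolvent_with_resolvent_mem_DP_swapped:
  assumes mu: "min_unsat G" and sv: "singular G (var_of l)"
    and sw: "singular (DP (var_of l) G) w" and vw: "var_of l \<noteq> w"
    and R: "R \<in> G" "l \<in> R" "w \<notin> vars R"
    and A: "A \<in> G" "Pos w \<in> A" "l \<notin> A" and B: "B \<in> G" "Neg w \<in> B" "l \<notin> B"
    and comp_l: "comp l \<in> A \<union> B"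
  shows "(A \<union> B - {Pos w, Neg w}) \<union> R - {l, comp l} \<in> DP w (DP (var_of l) G)"
proof -
  define f where "f X = (if comp l \<in> X then R \<union> X - {l, comp l} else X)" for X
  have f_mem: "f X \<in> DP (var_of l) G" if "X \<in> G" "l \<notin> X" for X
  proof (cases "comp l \<in> X")
    case True
    then show ?thesis
      using resolvent_mem_DP[OF mu sv R(1,2) that(1)] unfolding f_def by simp
  next
    case False
    then show ?thesis
      using DP_keep[OF that(1)] that(2) unfolding f_def by (simp add: var_of_mem_vars_iff)
  qed
  have "Pos w \<noteq> l" "Pos w \<noteq> comp l" "Neg w \<noteq> l" "Neg w \<noteq> comp l"
    using vw by (cases l; auto)+
  then have "Pos w \<in> f A" "Neg w \<in> f B"
    using A(2) B(2) unfolding f_def by auto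
  then have "f A \<union> f B - {Pos w, comp (Pos w)} \<in> DP w (DP (var_of l) G)"
    using resolvent_mem_DP[OF DP_min_unsat[OF mu sv], of "Pos w"] sw f_mem A B by simp
  moreover have "f A \<union> f B - {Pos w, Neg w} = (A \<union> B - {Pos w, Neg w}) \<union> R - {l, comp l}"
    using R(3) A(3) B(3) comp_l \<open>Pos w \<noteq> l\<close> \<open>Pos w \<noteq> comp l\<close> \<open>Neg w \<noteq> l\<close> \<open>Neg w \<noteq> comp l\<close>
    unfolding f_def mem_vars_iff by auto
  ultimately show ?thesis
    by simp
qed

lemma resolvents_sharing_clause_mem_DP_swapped:
  assumes mu: "min_unsat G" and sv: "singular G v"
    and sw: "singular (DP v G) (var_of z)" and vw: "var_of z \<noteq> v"
    and S: "S \<in> G" "z \<in> S" "v \<notin> vars S"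
    and O1: "O1 \<in> G" "comp z \<in> O1" "Pos v \<in> O1" and O2: "O2 \<in> G" "comp z \<in> O2" "Neg v \<in> O2"
  shows "(S \<union> O1 - {z, comp z}) \<union> (S \<union> O2 - {z, comp z}) - {Pos v, Neg v}
    \<in> DP (var_of z) (DP v G)"
proof -
  have "O1 \<union> O2 - {Pos v, comp (Pos v)} \<in> DP v G"
    using resolvent_mem_DP[OF mu _ O1(1,3) O2(1)] sv O2(3) by simp
  moreover have "comp z \<in> O1 \<union> O2 - {Pos v, comp (Pos v)}"
    using vw O1(2) by auto
  moreover have "S \<in> DP v G"
    using DP_keep S(1,3) .
  ultimately have "S \<union> (O1 \<union> O2 - {Pos v, Neg v}) - {z, comp z} \<in> DP (var_of z) (DP v G)"
    using resolvent_mem_DP[OF DP_min_unsat[OF mu sv] sw _ S(2)] by simp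
  moreover have "z \<notin> {Pos v, Neg v}" "S \<inter> {Pos v, Neg v} = {}"
    using vw S(3) by (auto simp: mem_vars_iff)
  then have "S \<union> (O1 \<union> O2 - {Pos v, Neg v}) - {z, comp z}
      = (S \<union> O1 - {z, comp z}) \<union> (S \<union> O2 - {z, comp z}) - {Pos v, Neg v}"
    by blast
  ultimately show ?thesis
    by simp
qed

lemma resolvents_of_resolvents_mem_DP_swapped:
  assumes mu: "min_unsat G" and sv: "singular G v" and sw: "singular G w"
    and svw: "singular (DP v G) w" and vw: "v \<noteq> w"
    and P1: "P1 \<in> G" "Pos w \<in> P1" and N1: "N1 \<in> G" "Neg w \<in> N1"
    and P2: "P2 \<in> G" "Pos w \<in> P2" and N2: "N2 \<in> G" "Neg w \<in> N2"
    and P: "Pos v \<in> P1 \<union> N1" "Neg v \<notin> P1 \<union> N1"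
    and N: "Neg v \<in> P2 \<union> N2" "Pos v \<notin> P2 \<union> N2"
  shows "(P1 \<union> N1 - {Pos w, Neg w}) \<union> (P2 \<union> N2 - {Pos w, Neg w}) - {Pos v, Neg v}
    \<in> DP w (DP v G)"
proof -
  obtain z where z: "var_of z = w" "ldeg G z = 1"
    using singular_obtains_unit_literal[OF sw] by metis
  then consider "z = Pos w" | "z = Neg w"
    by (cases z) auto
  then show ?thesis
  proof cases
    case 1
    then have "P1 = P2"
      using ldeg_eq_1_unique[OF z(2)] P1 P2 by blast
    then have "v \<notin> vars P1" "Pos v \<in> N1" "Neg v \<in> N2"
      using P N by (auto simp: mem_vars_iff)
    then show ?thesis
      using resolvents_sharing_clause_mem_DP_swapped[OF mu sv, of z P1 N1 N2] svw vw z(1) 1 P1 N1 N2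
        \<open>P1 = P2\<close> by simp
  next
    case 2
    then have "N1 = N2"
      using ldeg_eq_1_unique[OF z(2)] N1 N2 by blast
    then have "v \<notin> vars N1" "Pos v \<in> P1" "Neg v \<in> P2"
      using P N by (auto simp: mem_vars_iff)
    then show ?thesis
      using resolvents_sharing_clause_mem_DP_swapped[OF mu sv, of z N1 P1 P2] svw vw z(1) 2 N1 P1 P2
        \<open>N1 = N2\<close> by (simp add: Un_commute insert_commute)
  qed
qed

lemma resolvent_mem_DP_DP_swapped:
  assumes mu: "min_unsat G" and sv: "singular G v" and sw: "singular G w"
    and svw: "singular (DP v G) w" and vw: "v \<noteq> w"
    and P: "P \<in> DP w G" "Pos v \<in> P" and N: "N \<in> DP w G" "Neg v \<in> N"
  shows "P \<union> N - {Pos v, Neg v} \<in> DP w (DP v G)"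
proof -
  have "Neg v \<notin> P" "Pos v \<notin> N"
    using comp_notin_clause[OF min_unsat_clause[OF DP_min_unsat[OF mu sw]]] P N by fastforce+
  have push: "(A \<union> B - {Pos w, Neg w}) \<union> R - {l, comp l} \<in> DP w (DP v G)"
    if "var_of l = v" "R \<in> G" "l \<in> R" "w \<notin> vars R" "A \<in> G" "Pos w \<in> A" "l \<notin> A"
      "B \<in> G" "Neg w \<in> B" "l \<notin> B" "comp l \<in> A \<union> B" for l R A B
    using resolvent_with_resolvent_mem_DP_swapped[of G l w R A B] that mu sv svw vw by blast
  from P(1) show ?thesis
  proof (cases rule: DP_cases)
    case P_kept: 1
    from N(1) show ?thesis
    proof (cases rule: DP_cases)
      case 1
      then have "P \<union> N - {Pos v, comp (Pos v)} \<in> DP v G"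
        using resolvent_mem_DP[OF mu _ P_kept(1) P(2)] sv N(2) by simp
      moreover have "w \<notin> vars (P \<union> N - {Pos v, Neg v})"
        using P_kept 1 by (auto simp: mem_vars_iff)
      ultimately show ?thesis
        using DP_keep by simp
    next
      case (2 P2 N2)
      then show ?thesis
        using push[of "Pos v" P P2 N2] P P_kept N \<open>Pos v \<notin> N\<close> vw by (auto simp: Un_commute)
    qed
  next
    case P_resolvent: (2 P1 N1)
    from N(1) show ?thesis
    proof (cases rule: DP_cases)
      case 1
      then show ?thesis
        using push[of "Neg v" N P1 N1] P_resolvent P N \<open>Neg v \<notin> P\<close> vw
        by (auto simp: insert_commute)
    next
      case (2 P2 N2)
      have "Pos v \<in> P1 \<union> N1" "Neg v \<notin> P1 \<union> N1" "Neg v \<in> P2 \<union> N2" "Pos v \<notin> P2 \<union> N2"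
        using P N \<open>Neg v \<notin> P\<close> \<open>Pos v \<notin> N\<close> vw P_resolvent(5) 2(5) by auto
      then show ?thesis
        using resolvents_of_resolvents_mem_DP_swapped[OF mu sv sw svw vw P_resolvent(1,3,2,4) 2(1,3,2,4)]
          P_resolvent(5) 2(5) by simp
    qed
  qed
qed

lemma DP_commute:
  assumes mu: "min_unsat G" and "singular G v" "singular G w"
    and "singular (DP v G) w" "singular (DP w G) v"
  shows "DP v (DP w G) = DP w (DP v G)"
proof -
  have "v \<noteq> w"
    using singular_DP_neq assms(4) by metis
  have "min_unsat (DP v (DP w G))" "min_unsat (DP w (DP v G))"
    using DP_min_unsat[OF DP_min_unsat[OF mu assms(3)] assms(5)]
      DP_min_unsat[OF DP_min_unsat[OF mu assms(2)] assms(4)] .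
  \<comment> \<open>both sides are minimally unsatisfiable, so one inclusion suffices\<close>
  moreover have "DP v (DP w G) \<subseteq> DP w (DP v G)"
  proof
    fix E assume "E \<in> DP v (DP w G)"
    then show "E \<in> DP w (DP v G)"
    proof (cases rule: DP_cases)
      case 1
      from 1(1) show ?thesis
      proof (cases rule: DP_cases)
        case 1
        show ?thesis
          using DP_keep[OF DP_keep[OF 1(1) \<open>v \<notin> vars E\<close>] 1(2)] .
      next
        case (2 P N)
        then have "v \<notin> vars P" "v \<notin> vars N"
          using \<open>v \<notin> vars E\<close> \<open>v \<noteq> w\<close> by (auto simp: mem_vars_iff)
        then have "P \<in> DP v G" "N \<in> DP v G"
          using DP_keep[OF 2(1)] DP_keep[OF 2(2)] by simp_all
        then show ?thesis
          using resolvent_mem_DP[OF DP_min_unsat[OF mu assms(2)], of "Pos w"] assms(4) 2 by simp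
      qed
    next
      case (2 P N)
      then show ?thesis
        using resolvent_mem_DP_DP_swapped[OF assms(1-4) \<open>v \<noteq> w\<close>] by blast
    qed
  qed
  ultimately show ?thesis
    by (rule min_unsat_subset_eq)
qed

section \<open>Singularity degrees after swapping two singular variables\<close>

lemma swap_degrees_var_notin_unit_clause:
  assumes mu: "min_unsat G" and sv: "singular G (var_of x)" and unit: "ldeg G x = 1"
    and C: "C \<in> G" "x \<in> C" and sw: "singular (DP (var_of x) G) w" and w: "w \<notin> vars C"
  defines "a \<equiv> ldeg G (comp x)" and "b \<equiv> vdeg (DP (var_of x) G) w - 1"
    and "m1 \<equiv> vdeg G w - 1" and "m2 \<equiv> vdeg (DP w G) (var_of x) - 1"
  shows "singular G w \<and> singular (DP w G) (var_of x) \<and> m1 = b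
    \<and> a - 1 \<le> m2 \<and> min a b \<le> m2 \<and> m2 + 1 \<le> a + b"
proof -
  have "var_of x \<noteq> w"
    using singular_DP_neq[OF sw] by simp
  have "ldeg (DP (var_of x) G) l = ldeg G l" if "var_of l = w" for l
    using ldeg_DP_unit_notin[OF mu unit C] that w \<open>var_of x \<noteq> w\<close> by (auto simp: var_of_mem_vars_iff)
  then have "ldeg (DP (var_of x) G) (Pos w) = ldeg G (Pos w)"
    "ldeg (DP (var_of x) G) (Neg w) = ldeg G (Neg w)"
    by simp_all
  then have sG: "singular G w" and "m1 = b"
    using sw unfolding singular_def m1_def b_def vdeg_def by simp_all
  obtain q where q: "var_of q = w" "ldeg G q = 1"
    using singular_obtains_unit_literal[OF sG] by metis
  obtain C' where C': "C' \<in> G" "q \<in> C'"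
    using ldeg_eq_1_obtains[OF q(2)] .
  have "x \<notin> C'"
    using ldeg_eq_1_unique[OF unit C'(1) _ C] C'(2) w q(1) by (auto simp: var_of_mem_vars_iff)
  then have "ldeg (DP w G) x = 1"
    using ldeg_DP_unit_notin[OF mu q(2) C'] q(1) \<open>var_of x \<noteq> w\<close> unit by simp
  then have m2: "m2 = ldeg (DP w G) (comp x)"
    unfolding m2_def vdeg_var_of by simp
  have b: "b = ldeg G (comp q)"
    using \<open>m1 = b\<close> q unfolding m1_def vdeg_var_of[of G q, unfolded q(1)] by simp
  have "a - 1 \<le> m2 \<and> min a b \<le> m2 \<and> m2 + 1 \<le> a + b"
    using ldeg_DP_unit_bounds[OF mu _ q(2) C', of "comp x"] sG q(1) \<open>var_of x \<noteq> w\<close>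
    unfolding m2 a_def b by simp
  moreover have "a \<ge> 1" "b \<ge> 1"
    using singular_vdeg_ge_2[OF sv] singular_vdeg_ge_2[OF sw] unit
    unfolding a_def b_def vdeg_var_of by simp_all
  ultimately have "singular (DP w G) (var_of x)"
    using \<open>ldeg (DP w G) x = 1\<close> m2 unfolding singular_var_of_iff min_def by (auto split: if_splits)
  then show ?thesis
    using sG \<open>m1 = b\<close> \<open>a - 1 \<le> m2 \<and> min a b \<le> m2 \<and> m2 + 1 \<le> a + b\<close> by blast
qed

lemma swap_degrees_unit_clause_mem_comp_unit:
  assumes mu: "min_unsat G" and sv: "singular G (var_of x)" and unit: "ldeg G x = 1"
    and C: "C \<in> G" "x \<in> C" and y: "y \<in> C" "var_of y \<noteq> var_of x" and unit_y: "ldeg G (comp y) = 1"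
  defines "a \<equiv> ldeg G (comp x)" and "b \<equiv> vdeg (DP (var_of x) G) (var_of y) - 1"
    and "m1 \<equiv> vdeg G (var_of y) - 1" and "m2 \<equiv> vdeg (DP (var_of y) G) (var_of x) - 1"
  shows "singular G (var_of y) \<and> singular (DP (var_of y) G) (var_of x)
    \<and> m2 = a \<and> m1 \<le> b + 1 \<and> a \<le> b \<and> b + 1 \<le> m1 + a"
proof -
  obtain d where d: "ldeg (DP (var_of x) G) y + 1 + d = ldeg G y + a" "d < ldeg G y" "d \<le> a"
    using ldeg_DP_unit_mem_bounds[OF mu unit C y] unfolding a_def .
  obtain C' where C': "C' \<in> G" "comp y \<in> C'"
    using ldeg_eq_1_obtains[OF unit_y] .
  have "x \<notin> C'"
    using ldeg_eq_1_unique[OF unit C'(1) _ C] C'(2)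
      comp_notin_clause[OF min_unsat_clause[OF mu C(1)] y(1)] by blast
  moreover have "comp x \<notin> C'"
  proof
    assume "comp x \<in> C'"
    then have "y \<in> C \<inter> comp ` C'"
      using y(1) C'(2) by (simp add: in_comp_image_iff)
    then show False
      using clash_eq_singleton[OF mu unit C C'(1) \<open>comp x \<in> C'\<close>] y(2) by auto
  qed
  ultimately have "ldeg (DP (var_of y) G) x = 1" "ldeg (DP (var_of y) G) (comp x) = a"
    using ldeg_DP_unit_notin[OF mu unit_y C'] unit y(2) unfolding a_def by simp_all
  moreover have "a \<ge> 1"
    using sv unit unfolding a_def singular_var_of_iff by simp
  ultimately have "singular (DP (var_of y) G) (var_of x)" "m2 = a"
    unfolding m2_def singular_var_of_iff vdeg_var_of by simp_all
  moreover have "singular G (var_of y)"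
    using d(2) unit_y unfolding singular_var_of_iff by simp
  moreover have "m1 = ldeg G y" "b = ldeg (DP (var_of x) G) y"
    using unit_y ldeg_DP_unit_comp_mem[OF mu unit C y] unfolding m1_def b_def vdeg_var_of by simp_all
  ultimately show ?thesis
    using d by linarith
qed

lemma swap_degrees_unit_clause_mem_comp_nonunit:
  assumes mu: "min_unsat G" and sv: "singular G (var_of x)" and unit: "ldeg G x = 1"
    and C: "C \<in> G" "x \<in> C" and y: "y \<in> C" "var_of y \<noteq> var_of x"
    and sw: "singular (DP (var_of x) G) (var_of y)" and nonunit_y: "ldeg G (comp y) \<noteq> 1"
  defines "a \<equiv> ldeg G (comp x)" and "b \<equiv> vdeg (DP (var_of x) G) (var_of y) - 1"
    and "m1 \<equiv> vdeg G (var_of y) - 1" and "m2 \<equiv> vdeg (DP (var_of y) G) (var_of x) - 1"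
  shows "a = 1 \<and> b \<ge> 2 \<and> (singular G (var_of y) \<longrightarrow> singular (DP (var_of y) G) (var_of x) \<and> m1 = b)"
proof -
  obtain d where d: "ldeg (DP (var_of x) G) y + 1 + d = ldeg G y + a" "d < ldeg G y" "d \<le> a"
    using ldeg_DP_unit_mem_bounds[OF mu unit C y] unfolding a_def .
  have comp_y: "ldeg (DP (var_of x) G) (comp y) = ldeg G (comp y)"
    using ldeg_DP_unit_comp_mem[OF mu unit C y] .
  have "ldeg (DP (var_of x) G) y = 1" "ldeg (DP (var_of x) G) (comp y) \<ge> 2"
    using sw nonunit_y comp_y unfolding singular_var_of_iff min_def by (auto split: if_splits)
  moreover have "a \<ge> 1"
    using sv unit unfolding a_def singular_var_of_iff by simp
  \<comment> \<open>the degree of \<open>y\<close> in \<open>DP (var_of x) G\<close> is \<open>ldeg G y + a - 1 - d = 1\<close> with \<open>d < ldeg G y\<close>\<close>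
  ultimately have "a = 1" "b \<ge> 2" "b = ldeg G (comp y)"
    using d comp_y unfolding b_def vdeg_var_of by linarith+
  moreover have "singular (DP (var_of y) G) (var_of x) \<and> m1 = b" if "singular G (var_of y)"
  proof -
    have unit_y: "ldeg G y = 1"
      using that nonunit_y unfolding singular_var_of_iff min_def by (auto split: if_splits)
    have "{D \<in> G. comp y \<in> D \<and> x \<in> D} = {}"
      using ldeg_eq_1_unique[OF unit _ _ C] comp_notin_clause[OF min_unsat_clause[OF mu C(1)] y(1)]
      by blast
    then have "card {D \<in> G. comp y \<in> D \<and> x \<in> D} = 0"
      by (simp only: card.empty)
    then have "ldeg (DP (var_of y) G) x = b"
      using ldeg_DP_unit_mem[OF mu unit_y C(1) y(1) _ C(2)] y(2) unit \<open>b = ldeg G (comp y)\<close> by simp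
    moreover have "ldeg (DP (var_of y) G) (comp x) = 1"
      using ldeg_DP_unit_notin[OF mu unit_y C(1) y(1), of "comp x"] y(2) \<open>a = 1\<close>
        comp_notin_clause[OF min_unsat_clause[OF mu C(1)] C(2)] unfolding a_def by simp
    ultimately show ?thesis
      using \<open>b \<ge> 2\<close> \<open>b = ldeg G (comp y)\<close> unit_y
      unfolding singular_var_of_iff m1_def vdeg_var_of by simp
  qed
  ultimately show ?thesis
    by blast
qed

lemma singular_swap_degrees:
  assumes mu: "min_unsat G" and sv: "singular G v" and sw: "singular (DP v G) w"
  defines "a \<equiv> vdeg G v - 1" and "b \<equiv> vdeg (DP v G) w - 1"
    and "m1 \<equiv> vdeg G w - 1" and "m2 \<equiv> vdeg (DP w G) v - 1"
  shows "(a \<ge> 2 \<longrightarrow> singular G w \<and> singular (DP w G) v \<and> m1 \<le> b + 1 \<and> m2 \<ge> a - 1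
            \<and> (b = 1 \<longrightarrow> m1 = 1) \<and> (b \<ge> 2 \<longrightarrow> m2 \<ge> 2))
       \<and> (a = 1 \<longrightarrow> (b = 1 \<longrightarrow> singular G w \<and> singular (DP w G) v \<and> m2 = 1 \<and> m1 \<in> {1, 2})
            \<and> (b \<ge> 2 \<longrightarrow> singular G w \<longrightarrow> singular (DP w G) v \<and> m1 \<ge> 2))"
proof -
  \<comment> \<open>for \<open>v = v\<^sub>i\<close>, \<open>w = v\<^sub>i\<^sub>+\<^sub>1\<close>: \<open>a = m\<^sub>i\<close>, \<open>b = m\<^sub>i\<^sub>+\<^sub>1\<close>, \<open>m1 = m'\<^sub>i\<close>, \<open>m2 = m'\<^sub>i\<^sub>+\<^sub>1\<close>\<close>
  obtain x where x: "var_of x = v" "ldeg G x = 1"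
    using singular_obtains_unit_literal[OF sv] by metis
  obtain C where C: "C \<in> G" "x \<in> C"
    using ldeg_eq_1_obtains[OF x(2)] .
  have sv': "singular G (var_of x)" and sw': "singular (DP (var_of x) G) w"
    using sv sw x(1) by simp_all
  have a: "a = ldeg G (comp x)"
    using vdeg_var_of[of G x] x unfolding a_def by simp
  have "b \<ge> 1"
    using singular_vdeg_ge_2[OF sw] unfolding b_def by simp
  have "w \<noteq> var_of x"
    using singular_DP_neq[OF sw'] .
  consider (notin) "w \<notin> vars C" | (mem) y where "y \<in> C" "var_of y = w"
    by (metis mem_vars_iff var_of.simps)
  then show ?thesis
  proof cases
    case notin
    have "singular G w \<and> singular (DP w G) v \<and> m1 = b \<and> a - 1 \<le> m2 \<and> min a b \<le> m2 \<and> m2 + 1 \<le> a + b"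
      using swap_degrees_var_notin_unit_clause[OF mu sv' x(2) C sw' notin]
      unfolding a b_def m1_def m2_def x(1) .
    then show ?thesis
      using \<open>b \<ge> 1\<close> by auto
  next
    case (mem y)
    then have y: "y \<in> C" "var_of y \<noteq> var_of x"
      using \<open>w \<noteq> var_of x\<close> by simp_all
    show ?thesis
    proof (cases "ldeg G (comp y) = 1")
      case True
      have "singular G w \<and> singular (DP w G) v \<and> m2 = a \<and> m1 \<le> b + 1 \<and> a \<le> b \<and> b + 1 \<le> m1 + a"
        using swap_degrees_unit_clause_mem_comp_unit[OF mu sv' x(2) C y True]
        unfolding a b_def m1_def m2_def x(1) mem(2) .
      then show ?thesis
        by auto
    next
      case False
      have "a = 1 \<and> b \<ge> 2 \<and> (singular G w \<longrightarrow> singular (DP w G) v \<and> m1 = b)"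
        using swap_degrees_unit_clause_mem_comp_nonunit[OF mu sv' x(2) C y _ False] sw'
        unfolding a b_def m1_def m2_def x(1) mem(2) by simp
      then show ?thesis
        by auto
    qed
  qed
qed

section \<open>Singular tuples\<close>

lemma DPs_take_Suc: "j < length vs \<Longrightarrow> DPs F (take (Suc j) vs) = DP (vs ! j) (DPs F (take j vs))"
  by (simp add: DPs_def take_Suc_conv_app_nth)

lemma DPs_take_fold: "k \<le> j \<Longrightarrow> DPs F (take j vs) = fold DP (drop k (take j vs)) (DPs F (take k vs))"
  by (metis DPs_def append_take_drop_id fold_append comp_apply min.absorb1 take_take)

lemma min_unsat_DPs_take:
  assumes "singular_tuple F vs"
  shows "j \<le> length vs \<Longrightarrow> min_unsat (DPs F (take j vs))"
proof (induction j)
  case 0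
  then show ?case
    using assms by (simp add: singular_tuple_def DPs_def)
next
  case (Suc j)
  then have "min_unsat (DPs F (take j vs))" "singular (DPs F (take j vs)) (vs ! j)"
    using assms by (simp_all add: singular_tuple_def)
  then show ?case
    using DPs_take_Suc[of j vs F] Suc.prems DP_min_unsat by simp
qed

lemma singular_tuple_adjacent:
  assumes st: "singular_tuple F vs" and i: "Suc i < length vs"
  shows "min_unsat (DPs F (take i vs))" "singular (DPs F (take i vs)) (vs ! i)"
    and "singular (DP (vs ! i) (DPs F (take i vs))) (vs ! Suc i)"
proof -
  show "min_unsat (DPs F (take i vs))" "singular (DPs F (take i vs)) (vs ! i)"
    using min_unsat_DPs_take[OF st, of i] st i unfolding singular_tuple_def by simp_all
  have "singular (DPs F (take (Suc i) vs)) (vs ! Suc i)"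
    using st i unfolding singular_tuple_def by blast
  then show "singular (DP (vs ! i) (DPs F (take i vs))) (vs ! Suc i)"
    using DPs_take_Suc[of i vs F] i by simp
qed

lemma DPs_take_swap:
  assumes st: "singular_tuple F vs" and i: "Suc i < length vs"
    and "singular (DPs F (take i vs)) (vs ! Suc i)"
    and "singular (DP (vs ! Suc i) (DPs F (take i vs))) (vs ! i)"
    and j: "j \<noteq> Suc i"
  shows "DPs F (take j (vs[i := vs ! Suc i, Suc i := vs ! i])) = DPs F (take j vs)"
proof (cases "j \<le> i")
  case True
  then show ?thesis
    by simp
next
  case False
  define G where "G = DPs F (take i vs)"
  define vs' where "vs' = vs[i := vs ! Suc i, Suc i := vs ! i]"
  have mu: "min_unsat G" and sv: "singular G (vs ! i)" and svw: "singular (DP (vs ! i) G) (vs ! Suc i)"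
    using singular_tuple_adjacent[OF st i] unfolding G_def .
  have sw: "singular G (vs ! Suc i)" and swv: "singular (DP (vs ! Suc i) G) (vs ! i)"
    using assms(3,4) unfolding G_def .
  have commute: "DP (vs ! i) (DP (vs ! Suc i) G) = DP (vs ! Suc i) (DP (vs ! i) G)"
    using DP_commute[OF mu sv sw svw swv] .
  have len: "Suc i < length vs'" "i < length vs'"
    using i unfolding vs'_def by simp_all
  have "DPs F (take (Suc (Suc i)) vs') = DP (vs' ! Suc i) (DP (vs' ! i) (DPs F (take i vs')))"
    unfolding DPs_take_Suc[OF len(1)] DPs_take_Suc[OF len(2)] ..
  also have "\<dots> = DP (vs ! i) (DP (vs ! Suc i) G)"
    using i unfolding vs'_def G_def by simp
  also have "\<dots> = DP (vs ! Suc i) (DP (vs ! i) G)"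
    by (rule commute)
  also have "\<dots> = DPs F (take (Suc (Suc i)) vs)"
    unfolding DPs_take_Suc[OF i] DPs_take_Suc[OF Suc_lessD[OF i]] G_def ..
  finally have "DPs F (take (Suc (Suc i)) vs') = DPs F (take (Suc (Suc i)) vs)" .
  moreover have "drop (Suc (Suc i)) (take j vs') = drop (Suc (Suc i)) (take j vs)"
    unfolding vs'_def take_update_swap by simp
  moreover have "Suc (Suc i) \<le> j"
    using False j by simp
  ultimately show ?thesis
    using DPs_take_fold[of "Suc (Suc i)" j F vs'] DPs_take_fold[of "Suc (Suc i)" j F vs]
    unfolding vs'_def by simp
qed

lemma singular_tuple_swap_iff:
  assumes st: "singular_tuple F vs" and i: "Suc i < length vs"
  shows "singular_tuple F (vs[i := vs ! Suc i, Suc i := vs ! i]) \<longleftrightarrow>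
    singular (DPs F (take i vs)) (vs ! Suc i)
    \<and> singular (DP (vs ! Suc i) (DPs F (take i vs))) (vs ! i)" (is "singular_tuple F ?vs' \<longleftrightarrow> ?swapped")
proof -
  have "DPs F (take i ?vs') = DPs F (take i vs)" "?vs' ! i = vs ! Suc i"
    and "DPs F (take (Suc i) ?vs') = DP (vs ! Suc i) (DPs F (take i vs))" "?vs' ! Suc i = vs ! i"
    using i DPs_take_Suc[of i ?vs' F] by simp_all
  then have positions: "?swapped \<longleftrightarrow> singular (DPs F (take i ?vs')) (?vs' ! i)
      \<and> singular (DPs F (take (Suc i) ?vs')) (?vs' ! Suc i)"
    by simp
  show ?thesis
  proof
    assume "singular_tuple F ?vs'"
    then have "\<forall>j<length vs. singular (DPs F (take j ?vs')) (?vs' ! j)"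
      unfolding singular_tuple_def by simp
    then show ?swapped
      using i positions Suc_lessD by blast
  next
    assume swapped: ?swapped
    have "singular (DPs F (take j ?vs')) (?vs' ! j)" if "j < length vs" for j
    proof -
      consider "j = i" | "j = Suc i" | "j \<noteq> i" "j \<noteq> Suc i"
        by blast
      then show ?thesis
      proof cases
        case 3
        then show ?thesis
          using st that DPs_take_swap[OF st i swapped[THEN conjunct1] swapped[THEN conjunct2]]
          unfolding singular_tuple_def by simp
      qed (use swapped positions in simp_all)
    qed
    then show "singular_tuple F ?vs'"
      using st unfolding singular_tuple_def by simp
  qed
qed

lemma sing_deg_swap_other:
  assumes st: "singular_tuple F vs" and i: "Suc i < length vs"
    and st': "singular_tuple F (vs[i := vs ! Suc i, Suc i := vs ! i])"
    and j: "j \<noteq> i" "j \<noteq> Suc i"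
  shows "sing_deg F (vs[i := vs ! Suc i, Suc i := vs ! i]) j = sing_deg F vs j"
proof -
  have "singular (DPs F (take i vs)) (vs ! Suc i)"
    "singular (DP (vs ! Suc i) (DPs F (take i vs))) (vs ! i)"
    using singular_tuple_swap_iff[OF st i] st' by simp_all
  then show ?thesis
    unfolding sing_deg_def using DPs_take_swap[OF st i _ _ j(2)] j by simp
qed

theorem theorem41:
  fixes F :: "'v clause_set" and vs :: "'v list" and i :: nat
  assumes "min_unsat F"
    and "singular_tuple F vs"
    and "length vs \<ge> 2"
    and "Suc i < length vs"
  defines "vs' \<equiv> vs[i := vs ! Suc i, Suc i := vs ! i]"
  defines "m \<equiv> sing_deg F vs" and "m' \<equiv> sing_deg F vs'"
  shows
    "(singular_tuple F vs' \<longrightarrow>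
        (\<forall>j < length vs. j \<noteq> i \<and> j \<noteq> Suc i \<longrightarrow> m' j = m j))
     \<and> (m i \<ge> 2 \<longrightarrow>
          singular_tuple F vs'
          \<and> m' i \<le> m (Suc i) + 1
          \<and> m' (Suc i) \<ge> m i - 1
          \<and> (m (Suc i) = 1 \<longrightarrow> m' i = 1)
          \<and> (m (Suc i) \<ge> 2 \<longrightarrow> m' (Suc i) \<ge> 2))
     \<and> (m i = 1 \<longrightarrow>
          (m (Suc i) = 1 \<longrightarrow> singular_tuple F vs' \<and> m' (Suc i) = 1 \<and> m' i \<in> {1, 2})
          \<and> (m (Suc i) \<ge> 2 \<longrightarrow>
               (singular_tuple F vs' \<longleftrightarrow> singular (DPs F (take i vs)) (vs ! Suc i))
               \<and> (singular_tuple F vs' \<longrightarrow> m' i \<ge> 2)))"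
proof -
  \<comment> \<open>\<open>min_unsat F\<close> and \<open>length vs \<ge> 2\<close> are implied by the other hypotheses\<close>
  define G where "G = DPs F (take i vs)"
  note adjacent = singular_tuple_adjacent[OF assms(2,4), folded G_def]
  have "m i = vdeg G (vs ! i) - 1" "m (Suc i) = vdeg (DP (vs ! i) G) (vs ! Suc i) - 1"
    and "m' i = vdeg G (vs ! Suc i) - 1" "m' (Suc i) = vdeg (DP (vs ! Suc i) G) (vs ! i) - 1"
    using assms(4) DPs_take_Suc[of i vs F] DPs_take_Suc[of i vs' F]
    unfolding m_def m'_def sing_deg_def vs'_def G_def by simp_all
  moreover have "singular_tuple F vs' \<longleftrightarrow> singular G (vs ! Suc i) \<and> singular (DP (vs ! Suc i) G) (vs ! i)"
    using singular_tuple_swap_iff[OF assms(2,4)] unfolding vs'_def G_def .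
  moreover have "singular_tuple F vs' \<longrightarrow> (\<forall>j < length vs. j \<noteq> i \<and> j \<noteq> Suc i \<longrightarrow> m' j = m j)"
    using sing_deg_swap_other[OF assms(2,4)] unfolding m_def m'_def vs'_def by blast
  ultimately show ?thesis
    using singular_swap_degrees[OF adjacent] unfolding G_def by auto
qed

end
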